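(* Let $\mathcal{G}$ be a connected undirected network graph with a given set of monitor nodes, and let $\mathcal{B}$ be a biconnected component of $\mathcal{G}$ whose agents are $m'_1,\ldots,m'_{\kappa}$. Then the identifiability of the links of $\mathcal{B}$ does not depend on whether $m'_1,\ldots,m'_{\kappa}$ are monitors or not; that is, every link of $\mathcal{B}$ is identifiable with the given monitors if and only if it is identifiable when $m'_1,\ldots,m'_{\kappa}$ are (additionally) made monitors. The only exception is the link $m'_1m'_2$ (if it exists) in the case $\kappa=2$.
   Context: Network model: $\mathcal{G}=(V,L)$ is an undirected connected graph; each link $l\in L$ carries an unknown additive metric $w_l$. A subset of nodes are monitors; a measurement path is a simple path in $\mathcal{G}$ whose two end-points are distinct monitors, and its measurement is the sum of the metrics of its links. A link $l$ is identifiable if $w_l$ is uniquely determined by the measurements of all measurement paths (equivalently, any two metric assignments giving equal measurements on all measurement paths agree on $l$). A biconnected component of $\mathcal{G}$ is a maximal 2-vertex-connected subgraph (or a bridge). For a biconnected component $\mathcal{B}$, a node $v\in V(\mathcal{B})$ is an agent of $\mathcal{B}$ if $v$ is a monitor, or $v$ is a cut-vertex of $\mathcal{G}$ through which $\mathcal{B}$ is connected to a monitor lying outside $\mathcal{B}$ (i.e., removing $v$ separates $\mathcal{B}\setminus\{v\}$ from some monitor). *)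

theory Defs
  imports Complex_Main
begin

text \<open>Undirected simple graphs: vertex set V, edge set E of 2-element vertex sets.
  Links are edges; a link metric is a function w :: 'a set \<Rightarrow> real.\<close>

definition adj :: "'a set set \<Rightarrow> 'a \<Rightarrow> 'a \<Rightarrow> bool" where
  "adj E u v \<longleftrightarrow> {u, v} \<in> E"

definition graph_conn :: "'a set \<Rightarrow> 'a set set \<Rightarrow> bool" where
  "graph_conn V E \<longleftrightarrow> V \<noteq> {} \<and> (\<forall>u\<in>V. \<forall>v\<in>V. (adj E)\<^sup>*\<^sup>* u v)"

definition wf_graph :: "'a set \<Rightarrow> 'a set set \<Rightarrow> bool" where
  "wf_graph V E \<longleftrightarrow> finite V \<and> (\<forall>e\<in>E. \<exists>u v. u \<noteq> v \<and> u \<in> V \<and> v \<in> V \<and> e = {u, v})"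

definition del_vertex_edges :: "'a set set \<Rightarrow> 'a \<Rightarrow> 'a set set" where
  "del_vertex_edges E v = {e \<in> E. v \<notin> e}"

definition biconn_sub :: "'a set \<Rightarrow> 'a set set \<Rightarrow> 'a set \<Rightarrow> 'a set set \<Rightarrow> bool" where
  "biconn_sub V E VB EB \<longleftrightarrow> VB \<subseteq> V \<and> EB \<subseteq> E \<and> (\<forall>e\<in>EB. e \<subseteq> VB) \<and>
     ((card VB = 2 \<and> EB = {VB}) \<or>
      (card VB \<ge> 3 \<and> (\<forall>v\<in>VB. graph_conn (VB - {v}) (del_vertex_edges EB v))))"

definition biconn_comp :: "'a set \<Rightarrow> 'a set set \<Rightarrow> 'a set \<Rightarrow> 'a set set \<Rightarrow> bool" where
  "biconn_comp V E VB EB \<longleftrightarrow> biconn_sub V E VB EB \<and>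
     (\<forall>VB' EB'. biconn_sub V E VB' EB' \<and> VB \<subseteq> VB' \<and> EB \<subseteq> EB' \<longrightarrow> VB' = VB \<and> EB' = EB)"

text \<open>Agents of B w.r.t. monitor set M: monitors of B, and vertices v of B whose removal
  separates B - {v} from some monitor outside B (such v are necessarily cut-vertices of G).\<close>
definition agents :: "'a set \<Rightarrow> 'a set set \<Rightarrow> 'a set \<Rightarrow> 'a set \<Rightarrow> 'a set set \<Rightarrow> 'a set" where
  "agents V E M VB EB = {v \<in> VB. v \<in> M \<or>
     (\<exists>m \<in> M - VB. \<forall>u \<in> VB - {v}. \<not> (adj (del_vertex_edges E v))\<^sup>*\<^sup>* u m)}"

definition simple_path :: "'a set \<Rightarrow> 'a set set \<Rightarrow> 'a list \<Rightarrow> bool" where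
  "simple_path V E p \<longleftrightarrow> length p \<ge> 2 \<and> distinct p \<and> set p \<subseteq> V \<and>
     (\<forall>i. Suc i < length p \<longrightarrow> {p ! i, p ! Suc i} \<in> E)"

definition path_links :: "'a list \<Rightarrow> 'a set list" where
  "path_links p = map (\<lambda>(a, b). {a, b}) (zip p (tl p))"

definition measurement :: "('a set \<Rightarrow> real) \<Rightarrow> 'a list \<Rightarrow> real" where
  "measurement w p = sum_list (map w (path_links p))"

definition meas_path :: "'a set \<Rightarrow> 'a set set \<Rightarrow> 'a set \<Rightarrow> 'a list \<Rightarrow> bool" where
  "meas_path V E M p \<longleftrightarrow> simple_path V E p \<and> hd p \<in> M \<and> last p \<in> M \<and> hd p \<noteq> last p"

definition identifiable :: "'a set \<Rightarrow> 'a set set \<Rightarrow> 'a set \<Rightarrow> 'a set \<Rightarrow> bool" where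
  "identifiable V E M l \<longleftrightarrow>
     (\<forall>w1 w2 :: 'a set \<Rightarrow> real.
        (\<forall>p. meas_path V E M p \<longrightarrow> measurement w1 p = measurement w2 p) \<longrightarrow> w1 l = w2 l)"

end

theory Submission
  imports Defs
begin

text \<open>
  Extra monitors only add measurement paths, so identifiability with \<open>M\<close> implies
  identifiability with \<open>M \<union> A\<close>, where \<open>A\<close> is the set of agents of \<open>B\<close>.
  Conversely, let \<open>d\<close>, the difference of two link metrics, vanish on every measurement path
  between monitors. A simple path whose ends are monitors or agents meets \<open>B\<close> in a single
  segment inside \<open>B\<close> whose ends are agents: a detour outside \<open>B\<close> between two vertices
  of \<open>B\<close> would be an ear, contradicting maximality.
  Closing such a segment \<open>s\<close> from agent \<open>a\<close> to agent \<open>b\<close> with fixed access paths from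
  monitors to \<open>a\<close> and \<open>b\<close> shows that the \<open>d\<close>-measurement of \<open>s\<close> is \<open>h a + h b\<close> for a
  potential \<open>h\<close> on the agents. With at least three agents, biconnectivity puts every agent
  inside such a segment, which forces \<open>h = 0\<close>; so \<open>d\<close> restricted to \<open>B\<close> is invisible to the
  measurement paths of \<open>M \<union> A\<close>, and identifiability gives \<open>d l = 0\<close>. With two agents one
  subtracts the potential from \<open>d\<close> instead, which is harmless as long as \<open>l\<close> contains neither
  agent; identifiability forces this unless \<open>l\<close> joins the two agents, the excluded case.
  With at most one agent no link of \<open>B\<close> is identifiable at all.
\<close>

section \<open>Paths as vertex lists\<close>

definition walk :: "'a set set \<Rightarrow> 'a list \<Rightarrow> bool" where
  "walk F p \<longleftrightarrow> set (path_links p) \<subseteq> F"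

lemma path_links_Nil [simp]: "path_links [] = []"
  and path_links_singleton [simp]: "path_links [x] = []"
  and path_links_Cons_Cons [simp]: "path_links (x # y # xs) = {x, y} # path_links (y # xs)"
  by (simp_all add: path_links_def)

lemma path_links_split: "path_links (xs @ u # ys) = path_links (xs @ [u]) @ path_links (u # ys)"
  by (induction xs rule: induct_list012) simp_all

lemma path_links_append3:
  assumes "s \<noteq> []"
  shows "path_links (xs @ s @ ys) =
    path_links (xs @ [hd s]) @ path_links s @ path_links (last s # ys)"
proof -
  obtain x s1 where s1: "s = x # s1"
    using assms by (cases s) auto
  obtain s2 y where s2: "s = s2 @ [y]"
    using assms by (cases s rule: rev_cases) auto
  have "path_links (xs @ s @ ys) = path_links (xs @ [x]) @ path_links (s @ ys)"
    using path_links_split[of xs x "s1 @ ys"] s1 by simp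
  also have "path_links (s @ ys) = path_links s @ path_links (y # ys)"
    using path_links_split[of s2 y ys] s2 by simp
  moreover have "hd s = x" "last s = y"
    using s1 s2 by (simp, metis last_snoc)
  ultimately show ?thesis
    by simp
qed

lemma path_links_append:
  "xs \<noteq> [] \<Longrightarrow> ys \<noteq> [] \<Longrightarrow>
   path_links (xs @ ys) = path_links xs @ {last xs, hd ys} # path_links ys"
  by (induction xs rule: induct_list012) (auto simp: neq_Nil_conv)

lemma path_links_Cons: "xs \<noteq> [] \<Longrightarrow> path_links (x # xs) = {x, hd xs} # path_links xs"
  by (cases xs) simp_all

lemma path_links_rev: "path_links (rev xs) = rev (path_links xs)"
proof (induction xs)
  case (Cons x xs)
  then show ?case
    by (cases "xs = []") (simp_all add: path_links_append path_links_Cons last_rev insert_commute)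
qed simp

lemma length_path_links: "length (path_links p) = length p - 1"
  by (simp add: path_links_def)

lemma nth_path_links: "Suc i < length p \<Longrightarrow> path_links p ! i = {p ! i, p ! Suc i}"
  by (simp add: path_links_def nth_tl)

lemma link_subset_vertices: "e \<in> set (path_links p) \<Longrightarrow> e \<subseteq> set p"
  by (induction p rule: induct_list012) auto

lemma vertex_in_link: "x \<in> set p \<Longrightarrow> 2 \<le> length p \<Longrightarrow> \<exists>e\<in>set (path_links p). x \<in> e"
proof (induction p rule: induct_list012)
  case (3 x y zs)
  then show ?case by (cases zs) auto
qed simp_all

lemma link_meets_prefix: "e \<in> set (path_links (xs @ [u])) \<Longrightarrow> e \<inter> set xs \<noteq> {}"
  by (induction xs rule: induct_list012) auto

lemma distinct_hd_neq_last: "distinct p \<Longrightarrow> 2 \<le> length p \<Longrightarrow> hd p \<noteq> last p"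
  by (cases p) (auto simp: last_in_set)

lemma walk_Nil [simp]: "walk F []"
  and walk_singleton [simp]: "walk F [x]"
  and walk_Cons_Cons [simp]: "walk F (x # y # xs) \<longleftrightarrow> {x, y} \<in> F \<and> walk F (y # xs)"
  by (simp_all add: walk_def)

lemma walk_split: "walk F (xs @ u # ys) \<longleftrightarrow> walk F (xs @ [u]) \<and> walk F (u # ys)"
  by (subst walk_def, subst path_links_split) (auto simp: walk_def)

lemma walk_append:
  "walk F (xs @ ys) \<longleftrightarrow> walk F xs \<and> walk F ys \<and> (xs \<noteq> [] \<and> ys \<noteq> [] \<longrightarrow> {last xs, hd ys} \<in> F)"
  by (cases "xs = []"; cases "ys = []") (auto simp: walk_def path_links_append)

lemma walk_Cons: "walk F (x # xs) \<longleftrightarrow> walk F xs \<and> (xs \<noteq> [] \<longrightarrow> {x, hd xs} \<in> F)"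
  by (cases xs) auto

lemma walk_append3:
  "s \<noteq> [] \<Longrightarrow> walk F (xs @ [hd s]) \<Longrightarrow> walk F s \<Longrightarrow> walk F (last s # ys) \<Longrightarrow> walk F (xs @ s @ ys)"
  by (simp add: walk_def path_links_append3)

lemma walk_rev [simp]: "walk F (rev p) \<longleftrightarrow> walk F p"
  by (simp add: walk_def path_links_rev)

lemma walk_mono: "walk F p \<Longrightarrow> F \<subseteq> G \<Longrightarrow> walk G p"
  by (auto simp: walk_def)

lemma walk_path_links [simp]: "walk (set (path_links p)) p"
  by (simp add: walk_def)

lemma simple_path_iff_walk:
  "simple_path V E p \<longleftrightarrow> 2 \<le> length p \<and> distinct p \<and> set p \<subseteq> V \<and> walk E p"
proof -
  have "(\<forall>i. Suc i < length p \<longrightarrow> {p ! i, p ! Suc i} \<in> E) \<longleftrightarrow> set (path_links p) \<subseteq> E"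
  proof
    assume "\<forall>i. Suc i < length p \<longrightarrow> {p ! i, p ! Suc i} \<in> E"
    then show "set (path_links p) \<subseteq> E"
      by (auto simp: in_set_conv_nth length_path_links nth_path_links)
  next
    assume "set (path_links p) \<subseteq> E"
    then show "\<forall>i. Suc i < length p \<longrightarrow> {p ! i, p ! Suc i} \<in> E"
      by (metis Suc_lessE diff_Suc_1 length_path_links nth_mem nth_path_links subsetD)
  qed
  then show ?thesis by (auto simp: simple_path_def walk_def)
qed

lemma measurement_split:
  "measurement w (xs @ u # ys) = measurement w (xs @ [u]) + measurement w (u # ys)"
  unfolding measurement_def path_links_split[of xs u ys] by simp

lemma measurement_rev [simp]: "measurement w (rev p) = measurement w p"
  by (simp add: measurement_def path_links_rev rev_map[symmetric] sum_list_rev)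

lemma measurement_diff: "measurement (\<lambda>e. f e - g e) p = measurement f p - measurement g p"
  by (simp add: measurement_def sum_list_subtractf)

lemma measurement_add: "measurement (\<lambda>e. f e + g e) p = measurement f p + measurement g p"
  by (simp add: measurement_def sum_list_addf)

lemma measurement_cong:
  "(\<And>e. e \<in> set (path_links p) \<Longrightarrow> f e = g e) \<Longrightarrow> measurement f p = measurement g p"
  unfolding measurement_def by (metis map_eq_conv)

lemma measurement_eq_0:
  assumes "\<And>e. e \<in> set (path_links p) \<Longrightarrow> w e = 0"
  shows "measurement w p = 0"
proof -
  have "measurement w p = measurement (\<lambda>_. 0) p"
    by (rule measurement_cong) (rule assms)
  then show ?thesis by (simp add: measurement_def)
qed

lemma measurement_append3:
  "s \<noteq> [] \<Longrightarrow> measurement w (xs @ s @ ys) =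
    measurement w (xs @ [hd s]) + measurement w s + measurement w (last s # ys)"
  by (simp add: measurement_def path_links_append3)

lemma identifiable_iff_kernel:
  "identifiable V E N l \<longleftrightarrow> (\<forall>d. (\<forall>p. meas_path V E N p \<longrightarrow> measurement d p = 0) \<longrightarrow> d l = 0)"
proof
  assume l: "identifiable V E N l"
  show "\<forall>d. (\<forall>p. meas_path V E N p \<longrightarrow> measurement d p = 0) \<longrightarrow> d l = 0"
  proof (intro allI impI)
    fix d assume "\<forall>p. meas_path V E N p \<longrightarrow> measurement d p = 0"
    then have "\<forall>p. meas_path V E N p \<longrightarrow> measurement d p = measurement (\<lambda>_. 0) p"
      by (simp add: measurement_eq_0)
    with l show "d l = 0"
      unfolding identifiable_def by blast
  qed
next
  assume kernel: "\<forall>d. (\<forall>p. meas_path V E N p \<longrightarrow> measurement d p = 0) \<longrightarrow> d l = 0"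
  show "identifiable V E N l"
    unfolding identifiable_def
  proof (intro allI impI)
    fix w1 w2 :: "'a set \<Rightarrow> real"
    assume "\<forall>p. meas_path V E N p \<longrightarrow> measurement w1 p = measurement w2 p"
    then have "\<forall>p. meas_path V E N p \<longrightarrow> measurement (\<lambda>e. w1 e - w2 e) p = 0"
      by (simp add: measurement_diff)
    then show "w1 l = w2 l"
      using kernel by fastforce
  qed
qed

lemma identifiable_mono: "identifiable V E N l \<Longrightarrow> N \<subseteq> N' \<Longrightarrow> identifiable V E N' l"
  unfolding identifiable_def meas_path_def by blast

lemma measurement_indicator_hd:
  assumes "distinct p" "2 \<le> length p"
  shows "measurement (\<lambda>e. if hd p \<in> e then c else 0) p = c"
proof -
  obtain x y ys where p: "p = x # y # ys"
    using assms(2) by (metis One_nat_def Suc_1 Suc_le_length_iff)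
  have "measurement (\<lambda>e. if x \<in> e then c else 0) (y # ys) = 0"
    using assms(1) link_subset_vertices by (intro measurement_eq_0) (fastforce simp: p)
  then show ?thesis by (simp add: p measurement_def)
qed

lemma measurement_indicator_last:
  "distinct p \<Longrightarrow> 2 \<le> length p \<Longrightarrow> measurement (\<lambda>e. if last p \<in> e then c else 0) p = c"
  using measurement_indicator_hd[of "rev p" c] by (simp add: hd_rev)

section \<open>Reachability\<close>

lemma adj_commute: "adj F u v \<longleftrightarrow> adj F v u"
  by (simp add: adj_def insert_commute)

lemma reach_sym: "(adj F)\<^sup>*\<^sup>* u v \<Longrightarrow> (adj F)\<^sup>*\<^sup>* v u"
  by (metis adj_commute sympD sympI symp_rtranclp)

lemma reach_mono: "(adj F)\<^sup>*\<^sup>* u v \<Longrightarrow> F \<subseteq> G \<Longrightarrow> (adj G)\<^sup>*\<^sup>* u v"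
  by (metis (no_types, lifting) adj_def mono_rtranclp subsetD)

lemma walk_reach: "walk F p \<Longrightarrow> p \<noteq> [] \<Longrightarrow> (adj F)\<^sup>*\<^sup>* (hd p) (last p)"
proof (induction p rule: induct_list012)
  case (3 x y zs)
  then have "adj F x y" by (simp add: adj_def)
  with 3 show ?case by (simp add: converse_rtranclp_into_rtranclp)
qed simp_all

lemma reach_imp_simple_walk:
  assumes "(adj F)\<^sup>*\<^sup>* u v"
  obtains p where "p \<noteq> []" "hd p = u" "last p = v" "distinct p" "walk F p"
  using assms
proof (induction arbitrary: thesis rule: rtranclp_induct)
  case base
  show ?case by (rule base.prems[of "[u]"]) simp_all
next
  case (step y z)
  obtain p where p: "p \<noteq> []" "hd p = u" "last p = y" "distinct p" "walk F p"
    using step.IH .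
  show ?case
  proof (cases "z \<in> set p")
    case True
    then obtain xs ys where p_split: "p = xs @ z # ys" by (meson split_list)
    show ?thesis
      by (rule step.prems[of "xs @ [z]"])
        (use p p_split walk_split[of F xs z ys] in \<open>auto simp: hd_append\<close>)
  next
    case False
    show ?thesis
      by (rule step.prems[of "p @ [z]"])
        (use p False step.hyps(2) in \<open>auto simp: walk_append adj_def\<close>)
  qed
qed

lemma reach_del_vertex_self: "(adj (del_vertex_edges F v))\<^sup>*\<^sup>* u v \<Longrightarrow> u = v"
  by (erule rtranclp.cases) (auto simp: adj_def del_vertex_edges_def)

lemma walk_del_vertex: "walk F p \<Longrightarrow> v \<notin> set p \<Longrightarrow> walk (del_vertex_edges F v) p"
  using link_subset_vertices by (fastforce simp: walk_def del_vertex_edges_def)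

lemma reach_del_vertex_imp_walk:
  assumes "(adj (del_vertex_edges F v))\<^sup>*\<^sup>* u w" "u \<noteq> v"
  obtains R where "R \<noteq> []" "hd R = u" "last R = w" "distinct R" "walk F R" "v \<notin> set R"
proof -
  obtain R where R: "R \<noteq> []" "hd R = u" "last R = w" "distinct R"
    "walk (del_vertex_edges F v) R"
    using reach_imp_simple_walk[OF assms(1)] by blast
  have "v \<notin> set R"
  proof
    assume "v \<in> set R"
    obtain x xs where "R = x # xs"
      using R(1) by (cases R) simp_all
    then have "2 \<le> length R"
      using \<open>v \<in> set R\<close> R(2) assms(2) by (cases xs) simp_all
    then obtain e where "e \<in> set (path_links R)" "v \<in> e"
      using vertex_in_link[OF \<open>v \<in> set R\<close>] by blast
    then show False
      using R(5) by (auto simp: walk_def del_vertex_edges_def)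
  qed
  moreover have "walk F R"
    using R(5) by (rule walk_mono) (auto simp: del_vertex_edges_def)
  ultimately show ?thesis
    using that[OF R(1-4)] by blast
qed

lemma graph_conn_mono: "graph_conn S F \<Longrightarrow> F \<subseteq> G \<Longrightarrow> graph_conn S G"
  by (auto simp: graph_conn_def intro: reach_mono)

lemma graph_conn_if_reach_connected_set:
  assumes "S \<noteq> {}"
    and "\<forall>u\<in>S. \<exists>t\<in>T. (adj F)\<^sup>*\<^sup>* u t"
    and "\<forall>t1\<in>T. \<forall>t2\<in>T. (adj F)\<^sup>*\<^sup>* t1 t2"
  shows "graph_conn S F"
  unfolding graph_conn_def
proof (intro conjI ballI)
  fix u w assume "u \<in> S" "w \<in> S"
  then obtain t1 t2 where "t1 \<in> T" "t2 \<in> T" "(adj F)\<^sup>*\<^sup>* u t1" "(adj F)\<^sup>*\<^sup>* w t2"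
    using assms(2) by blast
  then show "(adj F)\<^sup>*\<^sup>* u w"
    using assms(3) by (meson reach_sym rtranclp_trans)
qed (fact assms(1))

lemma walk_reach_end_avoiding:
  assumes "distinct q" "u \<in> set q" "u \<noteq> v"
  obtains t where "t \<in> {hd q, last q}" "t \<noteq> v"
    "(adj (del_vertex_edges (set (path_links q)) v))\<^sup>*\<^sup>* u t"
proof -
  obtain as bs where q: "q = as @ u # bs"
    using assms(2) by (meson split_list)
  let ?F = "del_vertex_edges (set (path_links q)) v"
  have walks: "walk (set (path_links q)) (as @ [u])" "walk (set (path_links q)) (u # bs)"
    using walk_path_links[of q] walk_split[of _ as u bs] by (simp_all add: q)
  show ?thesis
  proof (cases "v \<in> set as")
    case True
    then have "v \<notin> set (u # bs)"
      using assms(1) q by auto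
    have "last q = last (u # bs)"
      using q by simp
    then have "(adj ?F)\<^sup>*\<^sup>* u (last q)" "last q \<noteq> v"
      using walk_reach[OF walk_del_vertex[OF walks(2)]] \<open>v \<notin> set (u # bs)\<close>
      by (simp_all, metis last_in_set list.discI)
    then show ?thesis
      using that[of "last q"] by simp
  next
    case False
    then have "v \<notin> set (as @ [u])"
      using assms(3) by simp
    have "hd q = hd (as @ [u])"
      using q by (cases as) simp_all
    then have "(adj ?F)\<^sup>*\<^sup>* (hd q) u" "hd q \<noteq> v"
      using walk_reach[OF walk_del_vertex[OF walks(1)]] \<open>v \<notin> set (as @ [u])\<close>
      by (simp_all, metis hd_in_set snoc_eq_iff_butlast)
    then show ?thesis
      using that[of "hd q"] by (simp add: reach_sym)
  qed
qed

section \<open>Biconnected subgraphs\<close>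

lemma biconn_sub_reach:
  assumes B: "biconn_sub V E VB EB" and "u \<in> VB" "w \<in> VB"
  shows "(adj EB)\<^sup>*\<^sup>* u w"
proof (cases "card VB = 2 \<and> EB = {VB}")
  case True
  show ?thesis
  proof (cases "u = w")
    case False
    then have "{u, w} = VB"
      using True assms(2,3) by (metis card_2_iff doubleton_eq_iff insertE singletonD)
    then show ?thesis
      using True by (simp add: adj_def r_into_rtranclp)
  qed simp
next
  case False
  then have card: "3 \<le> card VB" and conn: "\<forall>v\<in>VB. graph_conn (VB - {v}) (del_vertex_edges EB v)"
    using B by (auto simp: biconn_sub_def)
  have "card {u, w} < card VB"
    using card by (simp add: card_insert_if)
  then have "\<not> VB \<subseteq> {u, w}"
    by (metis card_mono finite.emptyI finite_insert leD)
  then obtain z where "z \<in> VB" "z \<noteq> u" "z \<noteq> w"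
    by blast
  then have "(adj (del_vertex_edges EB z))\<^sup>*\<^sup>* u w"
    using conn assms(2,3) by (simp add: graph_conn_def)
  then show ?thesis
    by (rule reach_mono) (auto simp: del_vertex_edges_def)
qed

lemma biconn_sub_reach_avoiding:
  assumes B: "biconn_sub V E VB EB" and t: "t1 \<in> VB - {v}" "t2 \<in> VB - {v}"
  shows "(adj (del_vertex_edges EB v))\<^sup>*\<^sup>* t1 t2"
proof (cases "v \<in> VB")
  case v: True
  show ?thesis
  proof (cases "card VB = 2 \<and> EB = {VB}")
    case True
    then have "card (VB - {v}) = 1"
      using v by (simp add: card_ge_0_finite)
    then have "t1 = t2"
      using t by (metis card_1_singletonE singletonD)
    then show ?thesis by simp
  next
    case False
    then have "graph_conn (VB - {v}) (del_vertex_edges EB v)"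
      using B v by (auto simp: biconn_sub_def)
    then show ?thesis
      using t by (simp add: graph_conn_def)
  qed
next
  case False
  then have "del_vertex_edges EB v = EB"
    using B by (auto simp: biconn_sub_def del_vertex_edges_def)
  then show ?thesis
    using biconn_sub_reach[OF B] t by simp
qed

lemma biconn_sub_add_ear:
  assumes B: "biconn_sub V E VB EB"
    and q: "walk E q" "distinct q" "set q \<subseteq> V" "hd q \<in> VB" "last q \<in> VB"
    and card: "3 \<le> card (VB \<union> set q)"
  shows "biconn_sub V E (VB \<union> set q) (EB \<union> set (path_links q))"
  unfolding biconn_sub_def
proof (intro conjI disjI2 ballI)
  show "VB \<union> set q \<subseteq> V" "EB \<union> set (path_links q) \<subseteq> E"
    using B q(1,3) by (auto simp: biconn_sub_def walk_def)
  show "e \<subseteq> VB \<union> set q" if "e \<in> EB \<union> set (path_links q)" for e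
    using that B link_subset_vertices[of e q] by (auto simp: biconn_sub_def)
  show "3 \<le> card (VB \<union> set q)" by (fact card)
  fix v assume v: "v \<in> VB \<union> set q"
  let ?F = "del_vertex_edges (EB \<union> set (path_links q)) v"
  show "graph_conn (VB \<union> set q - {v}) ?F"
  proof (rule graph_conn_if_reach_connected_set[where T = "VB - {v}"])
    show "VB \<union> set q - {v} \<noteq> {}"
    proof -
      have "finite (VB \<union> set q)"
        using card by (metis card.infinite not_numeral_le_zero)
      then have "2 \<le> card (VB \<union> set q - {v})"
        using card v by (simp add: card_Diff_singleton)
      then show ?thesis by (metis card.empty not_numeral_le_zero)
    qed
    have "del_vertex_edges EB v \<subseteq> ?F"
      by (auto simp: del_vertex_edges_def)
    then show "\<forall>t1\<in>VB - {v}. \<forall>t2\<in>VB - {v}. (adj ?F)\<^sup>*\<^sup>* t1 t2"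
      using biconn_sub_reach_avoiding[OF B] by (blast intro: reach_mono)
    show "\<forall>u\<in>VB \<union> set q - {v}. \<exists>t\<in>VB - {v}. (adj ?F)\<^sup>*\<^sup>* u t"
    proof
      fix u assume u: "u \<in> VB \<union> set q - {v}"
      show "\<exists>t\<in>VB - {v}. (adj ?F)\<^sup>*\<^sup>* u t"
      proof (cases "u \<in> VB")
        case False
        then have "u \<in> set q" "u \<noteq> v"
          using u by auto
        then obtain t where t: "t \<in> {hd q, last q}" "t \<noteq> v"
          and "(adj (del_vertex_edges (set (path_links q)) v))\<^sup>*\<^sup>* u t"
          by (rule walk_reach_end_avoiding[OF q(2)])
        moreover have "del_vertex_edges (set (path_links q)) v \<subseteq> ?F"
          by (auto simp: del_vertex_edges_def)
        ultimately have "(adj ?F)\<^sup>*\<^sup>* u t"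
          by (blast intro: reach_mono)
        moreover have "t \<in> VB - {v}"
          using q(4,5) t by blast
        ultimately show ?thesis by blast
      qed (use u in blast)
    qed
  qed
qed

lemma walk_reroute_before:
  assumes s: "walk F (s1 @ z' # s2)" "distinct (s1 @ z' # s2)" "t \<in> set s1"
    and r: "walk F (r @ [t])" "distinct (r @ [t])" "r \<noteq> []" "{hd r, z'} \<in> F"
      "set r \<inter> set (s1 @ z' # s2) = {}"
  obtains s' where "walk F s'" "distinct s'" "hd s' = hd (s1 @ z' # s2)"
    "last s' = last (s1 @ z' # s2)" "hd r \<in> set s'"
proof -
  obtain a1 a2 where s1: "s1 = a1 @ t # a2"
    using s(3) by (meson split_list)
  have "walk F (a1 @ [t])" "walk F (z' # s2)"
    using s(1) walk_split[of F a1 t "a2 @ z' # s2"] walk_split[of F "a1 @ t # a2" z' s2]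
    by (simp_all add: s1)
  moreover have "walk F ((t # rev r) @ [z'])"
  proof -
    have "walk F (z' # r @ [t])"
      using r(1,3,4) walk_Cons[of F z' "r @ [t]"] by (simp add: insert_commute)
    then show ?thesis
      using walk_rev[of F "z' # r @ [t]"] by simp
  qed
  ultimately have "walk F (a1 @ t # rev r @ z' # s2)"
    using walk_split[of F a1 t "rev r @ z' # s2"] walk_split[of F "t # rev r" z' s2] by simp
  moreover have "distinct (a1 @ t # rev r @ z' # s2)"
    using s(2) r(2,5) by (auto simp: s1)
  moreover have "hd r \<in> set (a1 @ t # rev r @ z' # s2)"
    using r(3) by simp
  ultimately show ?thesis
    using that by (simp add: s1 hd_append)
qed

lemma walk_reroute:
  assumes s: "walk F s" "distinct s" "z' \<in> set s"
    and z: "{z, z'} \<in> F" "z \<notin> set s"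
    and R: "walk F R" "distinct R" "R \<noteq> []" "hd R = z" "last R \<in> set s" "z' \<notin> set R"
  obtains s' where "walk F s'" "distinct s'" "hd s' = hd s" "last s' = last s" "z \<in> set s'"
proof -
  obtain r t r2 where R_split: "R = r @ t # r2" and t: "t \<in> set s"
    and r_outside: "\<forall>x\<in>set r. x \<notin> set s"
    using split_list_first_propE[of R "\<lambda>x. x \<in> set s"] R(3,5) last_in_set by metis
  have r: "walk F (r @ [t])" "distinct (r @ [t])" "r \<noteq> []" "hd r = z"
    using R R_split walk_split[of F r t r2] z(2) t by (auto simp: hd_append split: if_splits)
  obtain s1 s2 where s_split: "s = s1 @ z' # s2"
    using s(3) by (meson split_list)
  have r_disjoint: "set r \<inter> set (s1 @ z' # s2) = {}"
    using r_outside s_split by blast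
  have edge: "{hd r, z'} \<in> F"
    using z(1) r(4) by simp
  have "t \<noteq> z'"
    using R(6) R_split by auto
  then consider "t \<in> set s1" | "t \<in> set (rev s2)"
    using t s_split by auto
  then show ?thesis
  proof cases
    case 1
    obtain s' where "walk F s'" "distinct s'" "hd s' = hd s" "last s' = last s" "hd r \<in> set s'"
      by (rule walk_reroute_before[OF s(1,2)[unfolded s_split] 1 r(1-3) edge r_disjoint])
        (simp_all add: s_split)
    then show ?thesis
      using that r(4) by blast
  next
    case 2
    have rev_s: "walk F (rev s2 @ z' # rev s1)" "distinct (rev s2 @ z' # rev s1)"
      "set r \<inter> set (rev s2 @ z' # rev s1) = {}"
      using s s_split r_disjoint walk_rev[of F s] by auto
    obtain s' where "walk F s'" "distinct s'" "hd s' = last s" "last s' = hd s"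
      "hd r \<in> set s'"
      by (rule walk_reroute_before[OF rev_s(1,2) 2 r(1-3) edge rev_s(3)])
        (simp_all add: s_split hd_append last_append hd_rev last_rev)
    then show ?thesis
      using that[of "rev s'"] r(4) by (simp add: hd_rev last_rev)
  qed
qed

lemma biconn_sub_path_through_neighbour:
  assumes B: "biconn_sub V E VB EB"
    and "{x, z} \<in> EB" "y \<in> VB" "z \<in> VB" "x \<noteq> y" "z \<noteq> x" "z \<noteq> y"
  obtains s where "walk EB s" "distinct s" "hd s = x" "last s = y" "z \<in> set s"
proof -
  obtain R where R: "R \<noteq> []" "hd R = z" "last R = y" "distinct R" "walk EB R" "x \<notin> set R"
    using biconn_sub_reach_avoiding[OF B, of z x y] reach_del_vertex_imp_walk assms(3-7)
    by (metis Diff_iff singletonD)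
  then have "walk EB (x # R)"
    using assms(2) by (simp add: walk_Cons)
  moreover have "z \<in> set (x # R)"
    using R(1,2) by (cases R) simp_all
  ultimately show ?thesis
    using that[of "x # R"] R by simp
qed

lemma biconn_sub_path_through_step:
  assumes B: "biconn_sub V E VB EB" and xy: "x \<in> VB" "y \<in> VB" "x \<noteq> y"
    and z: "{z, z'} \<in> EB" "z \<in> VB" "z \<noteq> x" "z \<noteq> y"
    and IH: "z' \<noteq> x \<Longrightarrow> z' \<noteq> y \<Longrightarrow>
      \<exists>s. walk EB s \<and> distinct s \<and> hd s = x \<and> last s = y \<and> z' \<in> set s"
  shows "\<exists>s. walk EB s \<and> distinct s \<and> hd s = x \<and> last s = y \<and> z \<in> set s"
proof -
  have "z' \<in> VB"
    using z(1) B by (auto simp: biconn_sub_def)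
  consider "z' = x" | "z' = y" | "z' \<noteq> x" "z' \<noteq> y"
    by blast
  then show ?thesis
  proof cases
    case 1
    then show ?thesis
      using biconn_sub_path_through_neighbour[OF B, of x z y] z xy
      by (metis insert_commute)
  next
    case 2
    then obtain s where "walk EB s" "distinct s" "hd s = y" "last s = x" "z \<in> set s"
      using biconn_sub_path_through_neighbour[OF B, of y z x] z xy
      by (metis insert_commute)
    then show ?thesis
      by (intro exI[of _ "rev s"]) (simp add: hd_rev last_rev)
  next
    case 3
    then obtain s where s: "walk EB s" "distinct s" "hd s = x" "last s = y" "z' \<in> set s"
      using IH by blast
    show ?thesis
    proof (cases "z \<in> set s")
      case False
      then have "z \<noteq> z'"
        using s(5) by blast
      then obtain R where R: "R \<noteq> []" "hd R = z" "last R = x" "distinct R" "walk EB R"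
        "z' \<notin> set R"
        using biconn_sub_reach_avoiding[OF B, of z z' x] reach_del_vertex_imp_walk
          \<open>z' \<in> VB\<close> z xy 3
        by (metis Diff_iff singletonD)
      have "last R \<in> set s"
        using R(3) s(3,5) by (metis empty_iff empty_set hd_in_set)
      obtain s' where "walk EB s'" "distinct s'" "hd s' = hd s" "last s' = last s" "z \<in> set s'"
        by (rule walk_reroute[OF s(1,2,5) z(1) False R(5,4,1,2) \<open>last R \<in> set s\<close> R(6)])
      then show ?thesis
        using s by blast
    qed (use s in blast)
  qed
qed

lemma biconn_sub_path_through:
  assumes B: "biconn_sub V E VB EB"
    and xyz: "x \<in> VB" "y \<in> VB" "z \<in> VB" "x \<noteq> y" "z \<noteq> x" "z \<noteq> y"
  obtains s where "walk EB s" "distinct s" "hd s = x" "last s = y" "z \<in> set s"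
proof -
  have "\<exists>s. walk EB s \<and> distinct s \<and> hd s = x \<and> last s = y \<and> z \<in> set s"
    if "(adj EB)\<^sup>*\<^sup>* z x" "z \<in> VB" "z \<noteq> x" "z \<noteq> y" for z
    using that
  proof (induction rule: converse_rtranclp_induct)
    case (step z z')
    moreover have "z' \<in> VB"
      using step.hyps(1) B by (auto simp: adj_def biconn_sub_def)
    ultimately show ?case
      using biconn_sub_path_through_step[OF B xyz(1,2,4)] by (simp add: adj_def)
  qed simp
  then show ?thesis
    using biconn_sub_reach[OF B xyz(3,1)] xyz that by blast
qed

section \<open>Biconnected components, agents and identifiability\<close>

locale biconnected_component =
  fixes V :: "'a set" and E :: "'a set set" and VB :: "'a set" and EB :: "'a set set"
  assumes wf: "wf_graph V E"
    and component: "biconn_comp V E VB EB"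
begin

lemma biconn_sub: "biconn_sub V E VB EB"
  using component by (simp add: biconn_comp_def)

lemma maximal: "biconn_sub V E VB' EB' \<Longrightarrow> VB \<subseteq> VB' \<Longrightarrow> EB \<subseteq> EB' \<Longrightarrow> VB' = VB \<and> EB' = EB"
  using component by (simp add: biconn_comp_def)

lemma VB_subset: "VB \<subseteq> V"
  and EB_subset: "EB \<subseteq> E"
  and EB_edge_subset: "e \<in> EB \<Longrightarrow> e \<subseteq> VB"
  using biconn_sub by (auto simp: biconn_sub_def)

lemma finite_VB: "finite VB"
  using VB_subset wf finite_subset by (auto simp: wf_graph_def)

lemma two_le_card_VB: "2 \<le> card VB"
  using biconn_sub by (auto simp: biconn_sub_def)

lemma edge_two_vertices: "e \<in> E \<Longrightarrow> \<exists>u v. u \<noteq> v \<and> u \<in> V \<and> v \<in> V \<and> e = {u, v}"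
  using wf by (simp add: wf_graph_def)

lemma walk_vertices_in_V: "walk E p \<Longrightarrow> 2 \<le> length p \<Longrightarrow> set p \<subseteq> V"
  using vertex_in_link edge_two_vertices by (fastforce simp: walk_def)

lemma edge_inside_component:
  assumes "e \<in> E" "e \<subseteq> VB"
  shows "e \<in> EB"
proof (cases "card VB = 2 \<and> EB = {VB}")
  case True
  moreover obtain u v where "u \<noteq> v" "e = {u, v}"
    using edge_two_vertices assms(1) by blast
  ultimately have "e = VB"
    using assms(2) finite_VB by (simp add: card_subset_eq)
  with True show ?thesis by simp
next
  case False
  then have "3 \<le> card VB" "\<forall>v\<in>VB. graph_conn (VB - {v}) (del_vertex_edges EB v)"
    using biconn_sub by (auto simp: biconn_sub_def)
  then have "\<forall>v\<in>VB. graph_conn (VB - {v}) (del_vertex_edges (insert e EB) v)"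
    by (auto simp: del_vertex_edges_def elim!: graph_conn_mono)
  with \<open>3 \<le> card VB\<close> have "biconn_sub V E VB (insert e EB)"
    using biconn_sub assms by (auto simp: biconn_sub_def)
  then show ?thesis
    using maximal by blast
qed

definition external_edges :: "'a set set" where
  "external_edges = {e \<in> E. \<not> e \<subseteq> VB}"

lemma walk_external:
  assumes "walk E (xs @ [u])" "set xs \<inter> VB = {}"
  shows "walk external_edges (xs @ [u])"
  using assms link_meets_prefix by (fastforce simp: walk_def external_edges_def)

text \<open>Otherwise the connecting path would be an ear of the component, contradicting maximality.\<close>
lemma no_external_reach:
  assumes "x \<in> VB" "y \<in> VB" "(adj external_edges)\<^sup>*\<^sup>* x y"
  shows "x = y"
proof (rule ccontr)
  assume "x \<noteq> y"
  obtain p where p: "p \<noteq> []" "hd p = x" "last p = y" "distinct p" "walk external_edges p"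
    using reach_imp_simple_walk[OF assms(3)] by blast
  then obtain rest where p_rest: "p = x # rest"
    by (cases p) auto
  then have "y \<in> set rest"
    using p(3) \<open>x \<noteq> y\<close> by (cases rest) auto
  then obtain as y' bs where rest: "rest = as @ y' # bs" "y' \<in> VB" "\<forall>a\<in>set as. a \<notin> VB"
    using assms(2) split_list_first_propE[of rest "\<lambda>v. v \<in> VB"] by metis
  define q where "q = x # as @ [y']"
  have q: "walk external_edges q" "distinct q"
    using p(4,5) walk_split[of _ "x # as" y' bs] by (simp_all add: q_def p_rest rest)
  have "as \<noteq> []"
    using q(1) assms(1) rest(2) by (auto simp: q_def external_edges_def)
  then have out: "hd as \<in> set q" "hd as \<notin> VB"
    using rest(3) by (simp_all add: q_def)
  have walk_q: "walk E q"
    using q(1) by (rule walk_mono) (auto simp: external_edges_def)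
  have "card (insert (hd as) VB) \<le> card (VB \<union> set q)"
    using out by (intro card_mono) (auto simp: finite_VB)
  then have "3 \<le> card (VB \<union> set q)"
    using out(2) two_le_card_VB finite_VB by simp
  then have "biconn_sub V E (VB \<union> set q) (EB \<union> set (path_links q))"
    using biconn_sub_add_ear[OF biconn_sub walk_q q(2)] walk_vertices_in_V[OF walk_q]
      assms(1) rest(2)
    by (simp add: q_def)
  then show False
    using maximal out by blast
qed

lemma reach_exits_component_externally:
  assumes "(adj F)\<^sup>*\<^sup>* w z" "F \<subseteq> E" "w \<in> VB"
  obtains x where "x \<in> VB" "(adj F)\<^sup>*\<^sup>* w x" "(adj external_edges)\<^sup>*\<^sup>* x z"
proof -
  from assms(1) have "\<exists>x\<in>VB. (adj F)\<^sup>*\<^sup>* w x \<and> (adj external_edges)\<^sup>*\<^sup>* x z"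
  proof (induction rule: rtranclp_induct)
    case base
    then show ?case using assms(3) by blast
  next
    case (step y z)
    show ?case
    proof (cases "z \<in> VB")
      case True
      with step.hyps show ?thesis
        by (meson rtranclp.rtrancl_into_rtrancl rtranclp.rtrancl_refl)
    next
      case False
      then have "adj external_edges y z"
        using step.hyps(2) assms(2) by (auto simp: adj_def external_edges_def)
      with step.IH show ?thesis
        by (meson rtranclp.rtrancl_into_rtrancl)
    qed
  qed
  then show ?thesis
    using that by blast
qed

lemma no_external_detour:
  assumes "walk E (a # c @ [b])" "c \<noteq> []" "set c \<inter> VB = {}" "a \<in> VB" "b \<in> VB"
  shows "a = b"
proof -
  obtain c0 c' where c: "c = c0 # c'"
    using assms(2) by (cases c) auto
  then have "walk external_edges ((c0 # c') @ [b])"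
    using assms(1,3) walk_external[of "c0 # c'" b] by simp
  moreover have "{a, c0} \<in> external_edges"
    using assms(1,3) c by (simp add: external_edges_def)
  ultimately have "walk external_edges (a # c @ [b])"
    using c by simp
  then show ?thesis
    using walk_reach no_external_reach assms(4,5) by fastforce
qed

lemma simple_walk_stays_in_component:
  assumes s: "walk E s" "distinct s" "s \<noteq> []" "hd s \<in> VB" "last s \<in> VB"
  shows "set s \<subseteq> VB"
proof
  fix z assume "z \<in> set s"
  show "z \<in> VB"
  proof (rule ccontr)
    assume "z \<notin> VB"
    obtain s1 s2 where s_split: "s = s1 @ z # s2"
      using \<open>z \<in> set s\<close> by (meson split_list)
    have "\<exists>x\<in>set s1. x \<in> VB"
      using s(4) \<open>z \<notin> VB\<close> s_split by (cases s1) auto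
    then obtain b1 a c1 where s1: "s1 = b1 @ a # c1" "a \<in> VB" "\<forall>c\<in>set c1. c \<notin> VB"
      by (rule split_list_last_propE)
    have "\<exists>x\<in>set (z # s2). x \<in> VB"
      using s(5) s_split by (metis last_appendR last_in_set list.discI)
    then obtain c2 b d2 where s2: "z # s2 = c2 @ b # d2" "b \<in> VB" "\<forall>c\<in>set c2. c \<notin> VB"
      by (rule split_list_first_propE)
    have "c2 \<noteq> []"
      using s2(1,2) \<open>z \<notin> VB\<close> by (cases c2) auto
    have "s = b1 @ a # (c1 @ c2) @ b # d2"
      using s_split s1(1) s2(1) by simp
    then have "walk E (a # (c1 @ c2) @ [b])" "a \<noteq> b"
      using s(1,2) walk_split[of E b1 a "(c1 @ c2) @ b # d2"] walk_split[of E "a # c1 @ c2" b d2]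
      by auto
    moreover have "set (c1 @ c2) \<inter> VB = {}"
      using s1(3) s2(3) by auto
    ultimately show False
      using no_external_detour \<open>c2 \<noteq> []\<close> s1(2) s2(2) by blast
  qed
qed

end

locale monitored_component = biconnected_component V E VB EB
  for V :: "'a set" and E :: "'a set set" and VB :: "'a set" and EB :: "'a set set" +
  fixes M :: "'a set"
  assumes conn: "graph_conn V E"
    and monitors: "M \<subseteq> V"
begin

abbreviation A :: "'a set" where
  "A \<equiv> agents V E M VB EB"

lemma agents_subset: "A \<subseteq> VB"
  and monitor_in_component_is_agent: "M \<inter> VB \<subseteq> A"
  by (auto simp: agents_def)

lemma entry_vertex_is_agent:
  assumes q: "walk E (xs @ [u])" "hd (xs @ [u]) \<in> M \<union> A" "set xs \<inter> VB = {}"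
    and u: "u \<in> VB"
  shows "u \<in> A"
proof (cases "xs = []")
  case True
  then show ?thesis
    using q(2) u monitor_in_component_is_agent by auto
next
  case False
  define m where "m = hd xs"
  have "m \<in> set xs" "hd (xs @ [u]) = m"
    using False by (simp_all add: m_def)
  then have m: "m \<notin> VB" "m \<in> M"
    using q(2,3) agents_subset by auto
  have m_reach: "(adj external_edges)\<^sup>*\<^sup>* m u"
    using walk_reach[OF walk_external[OF q(1,3)]] False by (simp add: m_def)
  have "\<not> (adj (del_vertex_edges E u))\<^sup>*\<^sup>* w m" if w: "w \<in> VB - {u}" for w
  proof
    assume reach: "(adj (del_vertex_edges E u))\<^sup>*\<^sup>* w m"
    have "del_vertex_edges E u \<subseteq> E" "w \<in> VB"
      using w by (auto simp: del_vertex_edges_def)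
    then obtain x where x: "x \<in> VB" "(adj (del_vertex_edges E u))\<^sup>*\<^sup>* w x"
      "(adj external_edges)\<^sup>*\<^sup>* x m"
      by (rule reach_exits_component_externally[OF reach])
    have "x \<noteq> u"
      using reach_del_vertex_self[of E u w] x(2) w by auto
    moreover have "x = u"
      using no_external_reach[OF x(1) u rtranclp_trans[OF x(3) m_reach]] .
    ultimately show False by simp
  qed
  then show ?thesis
    unfolding agents_def using u m by blast
qed

lemma meas_path_decompose:
  assumes p: "meas_path V E (M \<union> A) p" and meets: "set p \<inter> VB \<noteq> {}"
  obtains xs s zs where "p = xs @ s @ zs" "s \<noteq> []" "set s \<subseteq> VB" "hd s \<in> A" "last s \<in> A"
    "set xs \<inter> VB = {}" "set zs \<inter> VB = {}"
proof -
  have walk_p: "walk E p" and "distinct p" "hd p \<in> M \<union> A" "last p \<in> M \<union> A"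
    using p by (auto simp: meas_path_def simple_path_iff_walk)
  have "\<exists>x\<in>set p. x \<in> VB"
    using meets by blast
  then obtain xs u ys where p_split: "p = xs @ u # ys" "u \<in> VB" "\<forall>x\<in>set xs. x \<notin> VB"
    by (rule split_list_first_propE)
  have "\<exists>x\<in>set (u # ys). x \<in> VB"
    using p_split(2) by simp
  then obtain s' v zs where tail: "u # ys = s' @ v # zs" "v \<in> VB" "\<forall>z\<in>set zs. z \<notin> VB"
    by (rule split_list_last_propE)
  define s where "s = s' @ [v]"
  have s: "p = xs @ s @ zs" "s \<noteq> []" "hd s = u" "last s = v"
    using p_split(1) tail(1) by (simp_all add: s_def, cases s', simp_all)
  have walks: "walk E (xs @ [u])" "walk E s" "walk E (v # zs)"
    using walk_p walk_split[of E xs u ys] walk_split[of E s' v zs] p_split(1) tail(1)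
    by (simp_all add: s_def)
  have "set s \<subseteq> VB"
    using simple_walk_stays_in_component[OF walks(2)] \<open>distinct p\<close> s p_split(2) tail(2) by simp
  moreover have "u \<in> A"
  proof -
    have "hd (xs @ [u]) = hd p" "set xs \<inter> VB = {}"
      using p_split by (auto simp: hd_append)
    then show ?thesis
      using entry_vertex_is_agent[OF walks(1)] \<open>hd p \<in> M \<union> A\<close> p_split(2) by simp
  qed
  moreover have "v \<in> A"
  proof -
    have "walk E (rev zs @ [v])" "hd (rev zs @ [v]) = last p" "set (rev zs) \<inter> VB = {}"
      using walks(3) walk_rev[of E "v # zs"] tail s(1,2,4) by (auto simp: hd_append hd_rev)
    then show ?thesis
      using entry_vertex_is_agent \<open>last p \<in> M \<union> A\<close> tail(2) by simp
  qed
  ultimately show ?thesis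
    using that s p_split(3) tail(3) by blast
qed

lemma walk_in_component:
  assumes "walk E s" "set s \<subseteq> VB"
  shows "walk EB s"
  unfolding walk_def
proof
  fix e assume "e \<in> set (path_links s)"
  then show "e \<in> EB"
    using assms link_subset_vertices[of e s] edge_inside_component[of e] by (auto simp: walk_def)
qed

lemma measurement_outside_component:
  assumes "\<forall>e. e \<notin> EB \<longrightarrow> f e = 0" "set xs \<inter> VB = {}"
  shows "measurement f (xs @ [u]) = 0"
proof (rule measurement_eq_0)
  fix e assume "e \<in> set (path_links (xs @ [u]))"
  then have "\<not> e \<subseteq> VB"
    using link_meets_prefix[of e xs u] assms(2) by blast
  then show "f e = 0"
    using assms(1) EB_edge_subset[of e] by blast
qed

definition agent_path :: "'a list \<Rightarrow> bool" where
  "agent_path s \<longleftrightarrow> 2 \<le> length s \<and> distinct s \<and> walk EB s \<and> hd s \<in> A \<and> last s \<in> A"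

text \<open>By \<open>meas_path_decompose\<close>, a measurement path sees a function supported on \<open>EB\<close>
  only through an agent path.\<close>
lemma meas_path_measurement_eq_0:
  assumes f: "\<forall>e. e \<notin> EB \<longrightarrow> f e = 0" "\<forall>s. agent_path s \<longrightarrow> measurement f s = 0"
    and p: "meas_path V E (M \<union> A) p"
  shows "measurement f p = 0"
proof (cases "set p \<inter> VB = {}")
  case True
  show ?thesis
  proof (rule measurement_eq_0)
    fix e assume "e \<in> set (path_links p)"
    then have "e \<subseteq> set p" "e \<noteq> {}"
      using link_subset_vertices by (auto simp: path_links_def in_set_zip)
    then show "f e = 0"
      using f(1) True EB_edge_subset by blast
  qed
next
  case False
  then obtain xs s zs where s: "p = xs @ s @ zs" "s \<noteq> []" "set s \<subseteq> VB" "hd s \<in> A"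
    "last s \<in> A" "set xs \<inter> VB = {}" "set zs \<inter> VB = {}"
    using meas_path_decompose[OF p] by blast
  have "measurement f (last s # zs) = 0"
    using measurement_outside_component[OF f(1), of "rev zs" "last s"] s(7)
      measurement_rev[of f "last s # zs"] by simp
  then have "measurement f p = measurement f s"
    using measurement_append3[OF s(2), of f xs zs]
      measurement_outside_component[OF f(1) s(6)] s(1)
    by simp
  also have "measurement f s = 0"
  proof (cases "2 \<le> length s")
    case True
    have "walk E s" "distinct s"
      using p s(1) by (auto simp: meas_path_def simple_path_iff_walk walk_append)
    then have "agent_path s"
      using True s(3-5) walk_in_component by (simp add: agent_path_def)
    then show ?thesis
      using f(2) by blast
  next
    case False
    then obtain u where "s = [u]"
      using s(2) by (cases s rule: remdups_adj.cases) auto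
    then show ?thesis
      by (simp add: measurement_def)
  qed
  finally show ?thesis .
qed

lemma link_determined_by_agent_paths:
  assumes "identifiable V E (M \<union> A) l"
    and "\<forall>e. e \<notin> EB \<longrightarrow> f e = 0" "\<forall>s. agent_path s \<longrightarrow> measurement f s = 0"
  shows "f l = 0"
  using assms meas_path_measurement_eq_0 by (simp add: identifiable_iff_kernel)

lemma agent_path_endpoints: "agent_path s \<Longrightarrow> hd s \<in> A \<and> last s \<in> A \<and> hd s \<noteq> last s"
  using distinct_hd_neq_last by (auto simp: agent_path_def)

lemma agent_path_in_component: "agent_path s \<Longrightarrow> set s \<subseteq> VB"
  using vertex_in_link EB_edge_subset by (fastforce simp: agent_path_def walk_def)

lemma measurement_restrict_to_component:
  "agent_path s \<Longrightarrow> measurement (\<lambda>e. if e \<in> EB then g e else 0) s = measurement g s"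
  by (rule measurement_cong) (auto simp: agent_path_def walk_def)

text \<open>The separation condition keeps access paths outside the component and makes those of
  different agents disjoint.\<close>
definition access_path :: "'a \<Rightarrow> 'a list \<Rightarrow> bool" where
  "access_path a P \<longleftrightarrow> P \<noteq> [] \<and> hd P \<in> M \<and> last P = a \<and> distinct P \<and> walk E P \<and>
     (\<forall>x\<in>set (butlast P). \<forall>u\<in>VB - {a}. \<not> (adj (del_vertex_edges E a))\<^sup>*\<^sup>* u x)"

lemma access_path_exists:
  assumes "a \<in> A"
  obtains P where "access_path a P"
proof (cases "a \<in> M")
  case True
  then show ?thesis
    using that[of "[a]"] by (simp add: access_path_def)
next
  case False
  then obtain m where m: "m \<in> M" and a: "a \<in> VB"
    and separated: "\<forall>u\<in>VB - {a}. \<not> (adj (del_vertex_edges E a))\<^sup>*\<^sup>* u m"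
    using assms unfolding agents_def by blast
  have "(adj E)\<^sup>*\<^sup>* m a"
    using conn monitors m a VB_subset by (auto simp: graph_conn_def)
  then obtain P where P: "P \<noteq> []" "hd P = m" "last P = a" "distinct P" "walk E P"
    by (rule reach_imp_simple_walk)
  have "\<not> (adj (del_vertex_edges E a))\<^sup>*\<^sup>* u x"
    if x: "x \<in> set (butlast P)" and u: "u \<in> VB - {a}" for x u
  proof
    assume u_x: "(adj (del_vertex_edges E a))\<^sup>*\<^sup>* u x"
    obtain as bs where "butlast P = as @ x # bs"
      using x by (meson split_list)
    then have P_split: "P = as @ x # bs @ [a]"
      using P(1,3) by (metis append_butlast_last_id append.assoc append_Cons)
    then have "walk E (as @ [x])" "a \<notin> set (as @ [x])" "hd (as @ [x]) = m"
      using P(2,4,5) walk_split[of E as x "bs @ [a]"] by (auto simp: hd_append)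
    then have "(adj (del_vertex_edges E a))\<^sup>*\<^sup>* m x"
      using walk_reach[OF walk_del_vertex] by fastforce
    then have "(adj (del_vertex_edges E a))\<^sup>*\<^sup>* u m"
      using u_x by (meson reach_sym rtranclp_trans)
    then show False
      using separated u by blast
  qed
  then have "access_path a P"
    using P m by (simp add: access_path_def)
  then show ?thesis
    by (rule that)
qed

lemma access_path_outside:
  assumes "access_path a P" "x \<in> set (butlast P)"
  shows "x \<notin> VB"
proof
  assume "x \<in> VB"
  have "P = butlast P @ [a]" "distinct P"
    using assms(1) by (auto simp: access_path_def)
  then have "x \<noteq> a"
    using assms(2) by (metis distinct_append disjoint_iff list.set_intros(1))
  then show False
    using assms \<open>x \<in> VB\<close> by (auto simp: access_path_def)
qed

lemma access_paths_disjoint: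
  assumes P: "access_path a P" and Q: "access_path b Q" and ab: "a \<noteq> b" "a \<in> VB" "b \<in> VB"
  shows "set (butlast P) \<inter> set (butlast Q) = {}"
proof (rule ccontr)
  assume "set (butlast P) \<inter> set (butlast Q) \<noteq> {}"
  then obtain x where x: "x \<in> set (butlast P)" "x \<in> set (butlast Q)"
    by blast
  obtain as bs where "butlast Q = as @ x # bs"
    using x(2) by (meson split_list)
  then have Q_split: "Q = as @ x # bs @ [b]"
    using Q by (metis access_path_def append_butlast_last_id append.assoc append_Cons)
  have "walk E (x # bs @ [b])"
    using Q Q_split walk_split[of E as x "bs @ [b]"] by (simp add: access_path_def)
  moreover have "a \<notin> set (x # bs @ [b])"
    using access_path_outside[OF Q] ab \<open>butlast Q = as @ x # bs\<close> by auto
  ultimately have "(adj (del_vertex_edges E a))\<^sup>*\<^sup>* b x"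
    using walk_reach[OF walk_del_vertex, of E "x # bs @ [b]" a] reach_sym by auto
  then show False
    using P x(1) ab by (auto simp: access_path_def)
qed

text \<open>Closing an agent path with the access paths of its two ends gives a measurement path
  between monitors.\<close>
lemma agent_path_measurement:
  assumes d: "\<forall>p. meas_path V E M p \<longrightarrow> measurement d p = 0"
    and s: "agent_path s" and P: "access_path (hd s) P" and Q: "access_path (last s) Q"
  shows "measurement d s = - measurement d P - measurement d Q"
proof -
  have s_props: "2 \<le> length s" "distinct s" "walk E s" "set s \<subseteq> VB" "s \<noteq> []"
    using s agent_path_in_component EB_subset by (auto simp: agent_path_def elim: walk_mono)
  have ends: "hd s \<in> VB" "last s \<in> VB" "hd s \<noteq> last s"
    using agent_path_endpoints[OF s] agents_subset by auto
  define xs where "xs = butlast P"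
  define ys where "ys = butlast Q"
  have P_eq: "P = xs @ [hd s]" and Q_eq: "Q = ys @ [last s]"
    using P Q by (metis access_path_def append_butlast_last_id xs_def ys_def)+
  have out: "set xs \<inter> VB = {}" "set ys \<inter> VB = {}" "set xs \<inter> set ys = {}"
    using access_path_outside[OF P] access_path_outside[OF Q]
      access_paths_disjoint[OF P Q ends(3,1,2)] by (auto simp: xs_def ys_def)
  define p where "p = xs @ s @ rev ys"
  have "walk E (xs @ [hd s])" "walk E (last s # rev ys)"
    using P Q walk_rev[of E Q] by (simp_all add: access_path_def P_eq Q_eq)
  then have walk_p: "walk E p"
    using walk_append3 s_props(3,5) by (simp add: p_def)
  have "distinct p"
    using P Q s_props(2,4) out by (auto simp: p_def access_path_def P_eq Q_eq)
  moreover have "2 \<le> length p"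
    using s_props(1) by (simp add: p_def)
  moreover have "hd p = hd P" "last p = hd Q"
    using s_props(5) by (simp_all add: p_def P_eq Q_eq hd_append last_rev)
  ultimately have "meas_path V E M p"
    using P Q walk_p walk_vertices_in_V[OF walk_p] distinct_hd_neq_last[of p]
    by (simp add: meas_path_def simple_path_iff_walk access_path_def)
  then have "measurement d p = 0"
    using d by blast
  moreover have "measurement d p = measurement d P + measurement d s + measurement d Q"
    using measurement_append3[OF s_props(5), of d xs "rev ys"] measurement_rev[of d Q]
    by (simp add: p_def P_eq Q_eq)
  ultimately show ?thesis
    by simp
qed

lemma agent_potential:
  assumes "\<forall>p. meas_path V E M p \<longrightarrow> measurement d p = 0"
  obtains h where "\<And>s. agent_path s \<Longrightarrow> measurement d s = h (hd s) + h (last s)"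
proof -
  have "access_path a (SOME P. access_path a P)" if "a \<in> A" for a
    using access_path_exists[OF that] by (metis someI)
  then show ?thesis
    using that[of "\<lambda>a. - measurement d (SOME P. access_path a P)"]
      agent_path_measurement[OF assms] agent_path_endpoints by simp
qed

lemma interior_agent_potential_zero:
  assumes h: "\<And>s. agent_path s \<Longrightarrow> measurement d s = h (hd s) + h (last s)"
    and s: "agent_path (xs @ k # ys)" and "xs \<noteq> []" "ys \<noteq> []" "k \<in> A"
  shows "h k = 0"
proof -
  have "agent_path (xs @ [k])" "agent_path (k # ys)"
    using s assms(3-5) walk_split[of EB xs k ys]
    by (auto simp: agent_path_def hd_append Suc_le_eq)
  moreover have "measurement d (xs @ k # ys) = measurement d (xs @ [k]) + measurement d (k # ys)"
    by (rule measurement_split)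
  ultimately show ?thesis
    using h s assms(3,4) by (simp add: hd_append)
qed

lemma agent_interior_if_three_agents:
  assumes "3 \<le> card A" "k \<in> A"
  obtains xs ys where "agent_path (xs @ k # ys)" "xs \<noteq> []" "ys \<noteq> []"
proof -
  have "2 \<le> card (A - {k})"
    using assms by (simp add: card_Diff_singleton)
  then obtain I where "I \<subseteq> A - {k}" "card I = 2"
    by (meson obtain_subset_with_card_n)
  then obtain i j where ij: "i \<in> A" "j \<in> A" "i \<noteq> j" "i \<noteq> k" "j \<noteq> k"
    by (auto simp: card_2_iff)
  then obtain s where s: "walk EB s" "distinct s" "hd s = i" "last s = j" "k \<in> set s"
    using biconn_sub_path_through[OF biconn_sub, of i j k] agents_subset assms(2) by blast
  then obtain xs ys where s_split: "s = xs @ k # ys"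
    by (meson split_list)
  have "xs \<noteq> []" "ys \<noteq> []"
    using s(3,4) s_split ij(4,5) by auto
  moreover have "agent_path s"
    using s ij calculation by (auto simp: agent_path_def s_split Suc_le_eq)
  ultimately show ?thesis
    using that s_split by blast
qed

lemma not_identifiable_if_one_agent:
  assumes "card A \<le> 1" "l \<in> EB"
  shows "\<not> identifiable V E (M \<union> A) l"
proof
  have "\<not> agent_path s" for s
  proof
    assume "agent_path s"
    then have "{hd s, last s} \<subseteq> A" "card {hd s, last s} = 2"
      using agent_path_endpoints by auto
    moreover have "finite A"
      using finite_VB agents_subset finite_subset by blast
    ultimately show False
      using assms(1) card_mono[of A "{hd s, last s}"] by linarith
  qed
  moreover assume "identifiable V E (M \<union> A) l"
  ultimately have "(\<lambda>e. if e = l then 1 else 0 :: real) l = 0"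
    using assms(2) by (intro link_determined_by_agent_paths) auto
  then show False
    by simp
qed

lemma measurement_endpoint_indicators:
  assumes "agent_path s" "{hd s, last s} = {a1, a2}"
  shows "measurement (\<lambda>e. (if a1 \<in> e then c1 else 0) + (if a2 \<in> e then c2 else 0)) s = c1 + c2"
proof -
  have s: "distinct s" "2 \<le> length s" "hd s \<noteq> last s"
    using assms(1) agent_path_endpoints[OF assms(1)] unfolding agent_path_def by blast+
  then consider "hd s = a1" "last s = a2" | "hd s = a2" "last s = a1"
    using assms(2) by (auto simp: doubleton_eq_iff)
  then show ?thesis
  proof cases
    case 1
    then show ?thesis
      using measurement_indicator_hd[OF s(1,2), of c1] measurement_indicator_last[OF s(1,2), of c2]
      by (simp add: measurement_add)
  next
    case 2
    then show ?thesis
      using measurement_indicator_hd[OF s(1,2), of c2] measurement_indicator_last[OF s(1,2), of c1]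
      by (simp add: measurement_add)
  qed
qed

lemma link_avoids_two_agents:
  assumes A: "A = {a1, a2}" "a1 \<noteq> a2"
    and l: "identifiable V E (M \<union> A) l" "l \<in> EB" "l \<noteq> A"
  shows "a1 \<notin> l" "a2 \<notin> l"
proof -
  define t :: "'a set \<Rightarrow> real"
    where "t e = (if e \<in> EB then (if a1 \<in> e then 1 else 0) + (if a2 \<in> e then -1 else 0)
      else 0)" for e
  have "t l = 0"
  proof (rule link_determined_by_agent_paths[OF l(1)])
    show "\<forall>s. agent_path s \<longrightarrow> measurement t s = 0"
    proof (intro allI impI)
      fix s assume s: "agent_path s"
      then have "{hd s, last s} = {a1, a2}"
        using agent_path_endpoints[OF s] A by (auto simp: doubleton_eq_iff)
      then show "measurement t s = 0"
        using measurement_restrict_to_component[OF s] measurement_endpoint_indicators[OF s]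
        unfolding t_def by simp
    qed
  qed (simp add: t_def)
  then have "a1 \<in> l \<longleftrightarrow> a2 \<in> l"
    using l(2) by (auto simp: t_def split: if_splits)
  moreover obtain u v where "l = {u, v}"
    using edge_two_vertices[of l] l(2) EB_subset by blast
  ultimately show "a1 \<notin> l" "a2 \<notin> l"
    using l(3) A by (auto simp: doubleton_eq_iff)
qed

lemma link_determined_two_agents:
  assumes h: "\<And>s. agent_path s \<Longrightarrow> measurement d s = h (hd s) + h (last s)"
    and A: "A = {a1, a2}" "a1 \<noteq> a2"
    and l: "identifiable V E (M \<union> A) l" "l \<in> EB" "l \<noteq> A"
  shows "d l = 0"
proof -
  define f where "f e = (if e \<in> EB then d e - ((if a1 \<in> e then h a1 else 0) +
    (if a2 \<in> e then h a2 else 0)) else 0)" for e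
  have "f l = 0"
  proof (rule link_determined_by_agent_paths[OF l(1)])
    show "\<forall>s. agent_path s \<longrightarrow> measurement f s = 0"
    proof (intro allI impI)
      fix s assume s: "agent_path s"
      then have ends: "{hd s, last s} = {a1, a2}"
        using agent_path_endpoints[OF s] A by (auto simp: doubleton_eq_iff)
      have "measurement f s = measurement d s - (h a1 + h a2)"
        using measurement_restrict_to_component[OF s] measurement_endpoint_indicators[OF s ends]
        unfolding f_def by (simp add: measurement_diff)
      also have "\<dots> = 0"
        using h[OF s] ends A(2) by (auto simp: doubleton_eq_iff)
      finally show "measurement f s = 0" .
    qed
  qed (simp add: f_def)
  then show ?thesis
    using l(2) link_avoids_two_agents[OF A l] by (simp add: f_def)
qed

lemma link_determined_three_agents:
  assumes h: "\<And>s. agent_path s \<Longrightarrow> measurement d s = h (hd s) + h (last s)"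
    and "3 \<le> card A" and l: "identifiable V E (M \<union> A) l" "l \<in> EB"
  shows "d l = 0"
proof -
  have "h k = 0" if "k \<in> A" for k
    using agent_interior_if_three_agents[OF assms(2) that] interior_agent_potential_zero[OF h]
      that by metis
  then have "\<forall>s. agent_path s \<longrightarrow> measurement (\<lambda>e. if e \<in> EB then d e else 0) s = 0"
    using h agent_path_endpoints measurement_restrict_to_component by simp
  then have "(\<lambda>e. if e \<in> EB then d e else 0) l = 0"
    by (intro link_determined_by_agent_paths[OF l(1)]) simp_all
  then show ?thesis
    using l(2) by simp
qed

lemma link_determined_by_monitor_paths:
  assumes l: "identifiable V E (M \<union> A) l" "l \<in> EB" "\<not> (card A = 2 \<and> l = A)"
    and d: "\<forall>p. meas_path V E M p \<longrightarrow> measurement d p = 0"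
  shows "d l = 0"
proof -
  obtain h where h: "\<And>s. agent_path s \<Longrightarrow> measurement d s = h (hd s) + h (last s)"
    using agent_potential[OF d] by blast
  consider "card A \<le> 1" | "card A = 2" | "3 \<le> card A"
    by linarith
  then show ?thesis
  proof cases
    case 1
    then show ?thesis
      using not_identifiable_if_one_agent l by blast
  next
    case 2
    then obtain a1 a2 where "A = {a1, a2}" "a1 \<noteq> a2"
      by (meson card_2_iff)
    then show ?thesis
      using link_determined_two_agents[OF h] l 2 by blast
  next
    case 3
    then show ?thesis
      using link_determined_three_agents[OF h] l by blast
  qed
qed

end

theorem mainTheorem1:
  fixes V :: "'a set" and E :: "'a set set" and M :: "'a set"
    and VB :: "'a set" and EB :: "'a set set"
  assumes "wf_graph V E"
    and "graph_conn V E"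
    and "M \<subseteq> V"
    and "biconn_comp V E VB EB"
    and "l \<in> EB"
    and "\<not> (card (agents V E M VB EB) = 2 \<and> l = agents V E M VB EB)"
  shows "identifiable V E M l \<longleftrightarrow> identifiable V E (M \<union> agents V E M VB EB) l"
proof -
  interpret monitored_component V E VB EB M
    using assms(1-4) by unfold_locales
  show ?thesis
  proof
    assume "identifiable V E M l"
    then show "identifiable V E (M \<union> A) l"
      by (rule identifiable_mono) blast
  next
    assume "identifiable V E (M \<union> A) l"
    then show "identifiable V E M l"
      using link_determined_by_monitor_paths assms(5,6) by (simp add: identifiable_iff_kernel)
  qed
qed

end
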